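(* For every $n\in\mathbb N$, the family of maps $\pi^n_X:\mathbb{T}_n(\mathbb{T}_{n+1}^-(X))\to\mathbb{T}_{n+1}(X)$, indexed by partial orders $X$, is a natural isomorphism $\pi^n:\mathbb{T}_n\circ\mathbb{T}_{n+1}^-\Rightarrow\mathbb{T}_{n+1}$; i.e. each $\pi^n_X$ is an isomorphism of partial orders and $\pi^n_Y\circ\mathbb{T}_n(\mathbb{T}_{n+1}^-(f))=\mathbb{T}_{n+1}(f)\circ\pi^n_X$ for every quasi embedding $f:X\to Y$.
   Context: A quasi embedding between partial orders is a function $f$ with $f(x)\leq f(y)\Rightarrow x\leq y$. For a partial order $X$, $M(X)$ is the set of finite multisets $[x_0,\dots,x_{m-1}]$ with elements from $X$, ordered by $[x_0,\dots,x_{m-1}]\leq_{M(X)}[y_0,\dots,y_{k-1}]$ iff there is an injection $g$ with $x_i\leq_X y_{g(i)}$ for all $i<m$. For $n\in\mathbb N$ and a partial order $X$, $\mathbb{T}_n(X)$ is generated by: $\overline x$ for each $x\in X$; $i\star\sigma$ for each $\sigma=[t_0,\dots,t_{m-1}]\in M(\mathbb{T}_n(X))$ and $i<n$. For $n>0$, $\mathbb{T}_n^-(X)=\{\overline x\mid x\in X\}\cup\{0\star\sigma\mid\sigma\in M(\mathbb{T}_n(X))\}\subseteq\mathbb{T}_n(X)$. The partial order $\leq_{\mathbb{T}_n(X)}$ is defined recursively: $\overline x\leq t$ iff either $t=\overline y$ with $x\leq_X y$, or $t=j\star[t_0,\dots,t_{m-1}]$ and $\overline x\leq t_l$ for some $l<m$;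 $i\star\sigma\leq t$ iff either $t=i\star\tau$ with $\sigma\leq_{M(\mathbb{T}_n(X))}\tau$, or $t=j\star[t_0,\dots,t_{m-1}]$ with $j\geq i$ and $i\star\sigma\leq t_l$ for some $l<m$; $\leq_{\mathbb{T}_n^-(X)}$ is its restriction. For a quasi embedding $f:X\to Y$, $\mathbb{T}_n(f)(\overline x)=\overline{f(x)}$, $\mathbb{T}_n(f)(i\star[t_0,\dots,t_{m-1}])=i\star[\mathbb{T}_n(f)(t_0),\dots,\mathbb{T}_n(f)(t_{m-1})]$, and $\mathbb{T}_n^-(f)$ is its restriction to $\mathbb{T}_n^-(X)$. Thus $\mathbb{T}_n(\mathbb{T}_{n+1}^-(X))$ consists of terms built from $\overline t$ ($t\in\mathbb{T}_{n+1}^-(X)$) with labels $i<n$. Define $\pi^n_X$ recursively by $\pi^n_X(\overline t)=t$ (using $\mathbb{T}_{n+1}^-(X)\subseteq\mathbb{T}_{n+1}(X)$) and $\pi^n_X(i\star[s_0,\dots,s_{m-1}])=(i+1)\star[\pi^n_X(s_0),\dots,\pi^n_X(s_{m-1})]$. *)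

theory Defs
  imports "HOL-Library.Multiset"
begin

definition po :: "'a set \<Rightarrow> ('a \<Rightarrow> 'a \<Rightarrow> bool) \<Rightarrow> bool" where
  "po A r \<longleftrightarrow> (\<forall>x\<in>A. r x x)
     \<and> (\<forall>x\<in>A. \<forall>y\<in>A. r x y \<and> r y x \<longrightarrow> x = y)
     \<and> (\<forall>x\<in>A. \<forall>y\<in>A. \<forall>z\<in>A. r x y \<and> r y z \<longrightarrow> r x z)"

definition qemb :: "'a set \<Rightarrow> ('a \<Rightarrow> 'a \<Rightarrow> bool) \<Rightarrow> 'b set \<Rightarrow> ('b \<Rightarrow> 'b \<Rightarrow> bool)
    \<Rightarrow> ('a \<Rightarrow> 'b) \<Rightarrow> bool" where
  "qemb A r B s f \<longleftrightarrow> f ` A \<subseteq> B \<and> (\<forall>x\<in>A. \<forall>y\<in>A. s (f x) (f y) \<longrightarrow> r x y)"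

definition ord_iso :: "'a set \<Rightarrow> ('a \<Rightarrow> 'a \<Rightarrow> bool) \<Rightarrow> 'b set \<Rightarrow> ('b \<Rightarrow> 'b \<Rightarrow> bool)
    \<Rightarrow> ('a \<Rightarrow> 'b) \<Rightarrow> bool" where
  "ord_iso A r B s f \<longleftrightarrow> bij_betw f A B \<and> (\<forall>x\<in>A. \<forall>y\<in>A. r x y \<longleftrightarrow> s (f x) (f y))"

definition mle :: "('a \<Rightarrow> 'b \<Rightarrow> bool) \<Rightarrow> 'a multiset \<Rightarrow> 'b multiset \<Rightarrow> bool" where
  "mle R M N \<longleftrightarrow> (\<exists>xs ys g. M = mset xs \<and> N = mset ys
      \<and> inj_on g {..<length xs} \<and> g ` {..<length xs} \<subseteq> {..<length ys}
      \<and> (\<forall>i<length xs. R (xs ! i) (ys ! g i)))"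

lemma mle_mono[mono]: "(\<And>x y. R x y \<longrightarrow> S x y) \<Longrightarrow> mle R M N \<longrightarrow> mle S M N"
  unfolding mle_def by (intro impI, elim exE conjE, intro exI conjI) auto

text \<open>Terms: leaves \<open>Lf x\<close> (= overline x) and nodes \<open>Nd i \<sigma>\<close> (= i \<star> \<sigma>).\<close>
datatype (plugins only: size) (labs: 'l, leaves: 'a) tm = Lf 'a | Nd 'l "('l, 'a) tm multiset"

text \<open>The carrier of T_n(X) for X with carrier A.\<close>
definition tms :: "nat \<Rightarrow> 'a set \<Rightarrow> (nat, 'a) tm set" where
  "tms n A = {t. labs t \<subseteq> {..<n} \<and> leaves t \<subseteq> A}"

text \<open>The carrier of T_n^-(X) (for n > 0).\<close>
definition tmsm :: "nat \<Rightarrow> 'a set \<Rightarrow> (nat, 'a) tm set" where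
  "tmsm n A = {t \<in> tms n A. case t of Lf x \<Rightarrow> True | Nd i \<sigma> \<Rightarrow> i = 0}"

text \<open>The order on T_n(X), given the order r of X (restricted to carriers when used).\<close>
inductive tm_le :: "('a \<Rightarrow> 'a \<Rightarrow> bool) \<Rightarrow> (nat, 'a) tm \<Rightarrow> (nat, 'a) tm \<Rightarrow> bool"
  for r :: "'a \<Rightarrow> 'a \<Rightarrow> bool" where
  lf_lf: "r x y \<Longrightarrow> tm_le r (Lf x) (Lf y)"
| lf_nd: "t \<in># T \<Longrightarrow> tm_le r (Lf x) t \<Longrightarrow> tm_le r (Lf x) (Nd j T)"
| nd_nd: "mle (tm_le r) S T \<Longrightarrow> tm_le r (Nd i S) (Nd i T)"
| nd_sub: "i \<le> j \<Longrightarrow> t \<in># T \<Longrightarrow> tm_le r (Nd i S) t \<Longrightarrow> tm_le r (Nd i S) (Nd j T)"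

primrec pi :: "(nat, (nat, 'a) tm) tm \<Rightarrow> (nat, 'a) tm" where
  "pi (Lf t) = t"
| "pi (Nd i M) = Nd (Suc i) (image_mset pi M)"

end

theory Submission
  imports Defs
begin

text \<open>
  \<open>pi\<close> raises every label by one and substitutes the leaves of its argument, which are
  leaves or \<open>0\<close>-rooted terms of \<open>T\<^sub>n\<^sub>+\<^sub>1(X)\<close>. It is inverted by \<open>pi_inv\<close>, which lowers the
  labels of a term of \<open>T\<^sub>n\<^sub>+\<^sub>1(X)\<close> top-down and cuts it at leaves and at nodes labelled \<open>0\<close>.
  For the order, unfold both \<open>s \<le> t\<close> and \<open>pi s \<le> pi t\<close> by the recursive clauses of the
  definition and induct on \<open>t\<close>. The clauses correspond one to one: a comparison \<open>i \<le> j\<close> of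
  labels becomes \<open>i + 1 \<le> j + 1\<close>, and a \<open>0\<close>-rooted term, like a leaf, lies below a node
  with positive label exactly when it lies below one of its children.
\<close>

lemma image_mset_eq_msetE:
  assumes "image_mset f M = mset ys"
  obtains xs where "mset xs = M" and "map f xs = ys"
  using assms
proof (induction ys arbitrary: M thesis)
  case Nil
  then show ?case by simp
next
  case (Cons y ys)
  have "y \<in># image_mset f M"
    using Cons.prems(2) by simp
  then obtain x where x: "x \<in># M" "y = f x"
    by auto
  then have "image_mset f (M - {#x#}) = mset ys"
    using Cons.prems(2) by (simp add: image_mset_Diff)
  then obtain xs where "mset xs = M - {#x#}" "map f xs = ys"
    using Cons.IH by blast
  then show ?case
    using Cons.prems(1)[of "x # xs"] x by simp
qed

lemma mle_mono_on:
  assumes "mle R S T" and "\<And>x y. x \<in># S \<Longrightarrow> y \<in># T \<Longrightarrow> R x y \<Longrightarrow> R' x y"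
  shows "mle R' S T"
proof -
  obtain xs ys g where "S = mset xs" "T = mset ys" "inj_on g {..<length xs}"
    and g: "g ` {..<length xs} \<subseteq> {..<length ys}" "\<forall>i<length xs. R (xs ! i) (ys ! g i)"
    using assms(1) unfolding mle_def by blast
  moreover have "\<forall>i<length xs. R' (xs ! i) (ys ! g i)"
    using assms(2) g calculation(1,2) by (fastforce simp: image_subset_iff)
  ultimately show ?thesis
    unfolding mle_def by blast
qed

lemma mle_cong:
  assumes "\<And>x y. x \<in># S \<Longrightarrow> y \<in># T \<Longrightarrow> R x y \<longleftrightarrow> R' x y"
  shows "mle R S T \<longleftrightarrow> mle R' S T"
  using mle_mono_on assms by metis

lemma mle_image_mset_iff:
  "mle R (image_mset f S) (image_mset g T) \<longleftrightarrow> mle (\<lambda>x y. R (f x) (g y)) S T"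
proof
  assume "mle R (image_mset f S) (image_mset g T)"
  then obtain xs' ys' h where xs': "image_mset f S = mset xs'" and ys': "image_mset g T = mset ys'"
    and h: "inj_on h {..<length xs'}" "h ` {..<length xs'} \<subseteq> {..<length ys'}"
      "\<forall>i<length xs'. R (xs' ! i) (ys' ! h i)"
    unfolding mle_def by blast
  obtain xs where xs: "mset xs = S" "map f xs = xs'"
    using xs' by (rule image_mset_eq_msetE)
  obtain ys where ys: "mset ys = T" "map g ys = ys'"
    using ys' by (rule image_mset_eq_msetE)
  have len: "length xs' = length xs" "length ys' = length ys"
    using xs(2) ys(2) by auto
  have "h ` {..<length xs} \<subseteq> {..<length ys}"
    using h(2) unfolding len .
  moreover have "\<forall>i<length xs. R (f (xs ! i)) (g (ys ! h i))"
    using h(3) calculation xs(2) ys(2) by (auto simp: image_subset_iff)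
  ultimately show "mle (\<lambda>x y. R (f x) (g y)) S T"
    unfolding mle_def using h(1) len xs(1) ys(1) by (intro exI[of _ xs] exI[of _ ys] exI[of _ h]) simp
next
  assume "mle (\<lambda>x y. R (f x) (g y)) S T"
  then obtain xs ys h where "S = mset xs" "T = mset ys" "inj_on h {..<length xs}"
    and "h ` {..<length xs} \<subseteq> {..<length ys}" "\<forall>i<length xs. R (f (xs ! i)) (g (ys ! h i))"
    unfolding mle_def by blast
  then show "mle R (image_mset f S) (image_mset g T)"
    unfolding mle_def by (intro exI[of _ "map f xs"] exI[of _ "map g ys"] exI[of _ h]) auto
qed

lemma tm_le_Lf_Lf [simp]: "tm_le r (Lf x) (Lf y) \<longleftrightarrow> r x y"
  by (auto elim: tm_le.cases intro: tm_le.intros)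

lemma tm_le_Lf_Nd [simp]: "tm_le r (Lf x) (Nd j T) \<longleftrightarrow> (\<exists>u\<in>#T. tm_le r (Lf x) u)"
  by (auto elim: tm_le.cases intro: tm_le.intros)

lemma tm_le_Nd_Lf [simp]: "\<not> tm_le r (Nd i S) (Lf y)"
  by (auto elim: tm_le.cases)

lemma tm_le_Nd_Nd [simp]:
  "tm_le r (Nd i S) (Nd j T) \<longleftrightarrow>
     i = j \<and> mle (tm_le r) S T \<or> i \<le> j \<and> (\<exists>u\<in>#T. tm_le r (Nd i S) u)"
  by (auto elim: tm_le.cases intro: tm_le.intros)

fun zero_rooted :: "(nat, 'a) tm \<Rightarrow> bool" where
  "zero_rooted (Lf _) = True"
| "zero_rooted (Nd i _) = (i = 0)"

lemma Lf_in_tms [simp]: "Lf x \<in> tms n A \<longleftrightarrow> x \<in> A"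
  by (simp add: tms_def)

lemma Nd_in_tms [simp]: "Nd i M \<in> tms n A \<longleftrightarrow> i < n \<and> (\<forall>t\<in>#M. t \<in> tms n A)"
  by (auto simp: tms_def)

lemma tmsm_eq: "tmsm n A = {t \<in> tms n A. zero_rooted t}"
proof -
  have "(case t of Lf x \<Rightarrow> True | Nd i \<sigma> \<Rightarrow> i = 0) \<longleftrightarrow> zero_rooted t" for t :: "(nat, 'a) tm"
    by (cases t) simp_all
  then show ?thesis
    by (simp add: tmsm_def)
qed

lemma zero_rooted_leaves_if_in_tms: "s \<in> tms n (tmsm m A) \<Longrightarrow> \<forall>u\<in>leaves s. zero_rooted u"
  by (auto simp: tms_def tmsm_eq)

primrec pi_inv :: "(nat, 'a) tm \<Rightarrow> (nat, (nat, 'a) tm) tm" where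
  "pi_inv (Lf x) = Lf (Lf x)"
| "pi_inv (Nd i M) = (case i of 0 \<Rightarrow> Lf (Nd 0 M) | Suc k \<Rightarrow> Nd k (image_mset pi_inv M))"

lemma pi_pi_inv [simp]: "pi (pi_inv t) = t"
  by (induction t) (auto split: nat.split simp: multiset.map_comp cong: image_mset_cong)

lemma pi_inv_pi: "\<forall>u\<in>leaves s. zero_rooted u \<Longrightarrow> pi_inv (pi s) = s"
proof (induction s)
  case (Lf v)
  then show ?case by (cases v) auto
next
  case (Nd i M)
  then show ?case by (auto simp: multiset.map_comp cong: image_mset_cong)
qed

lemma pi_in_tms: "s \<in> tms n (tmsm (Suc n) A) \<Longrightarrow> pi s \<in> tms (Suc n) A"
  by (induction s) (auto simp: tmsm_eq)

lemma pi_inv_in_tms: "t \<in> tms (Suc n) A \<Longrightarrow> pi_inv t \<in> tms n (tmsm (Suc n) A)"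
  by (induction t) (auto simp: tmsm_eq split: nat.split)

lemma bij_betw_pi: "bij_betw pi (tms n (tmsm (Suc n) A)) (tms (Suc n) A)"
  by (rule bij_betw_byWitness[where f' = pi_inv])
    (auto simp: pi_inv_pi zero_rooted_leaves_if_in_tms pi_in_tms pi_inv_in_tms)

lemma tm_le_zero_rooted_Nd_Suc:
  "zero_rooted a \<Longrightarrow> tm_le r a (Nd (Suc j) T) \<longleftrightarrow> (\<exists>u\<in>#T. tm_le r a u)"
  by (cases a) auto

lemma tm_le_pi_iff:
  assumes "\<forall>u\<in>leaves s. zero_rooted u" and "\<forall>u\<in>leaves t. zero_rooted u"
  shows "tm_le (tm_le r) s t \<longleftrightarrow> tm_le r (pi s) (pi t)"
  using assms
proof (induction t arbitrary: s)
  case (Lf w)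
  then show ?case
    by (cases s; cases w) auto
next
  case (Nd j M)
  have IH: "tm_le (tm_le r) s' u \<longleftrightarrow> tm_le r (pi s') (pi u)"
    if "u \<in># M" and "\<forall>v\<in>leaves s'. zero_rooted v" for s' u
    using Nd.IH that Nd.prems(2) by auto
  show ?case
  proof (cases s)
    case (Lf v)
    then show ?thesis
      using IH Nd.prems(1) by (simp add: tm_le_zero_rooted_Nd_Suc)
  next
    case (Nd i S)
    have "mle (tm_le (tm_le r)) S M \<longleftrightarrow> mle (tm_le r) (image_mset pi S) (image_mset pi M)"
      unfolding mle_image_mset_iff using IH Nd Nd.prems(1) by (intro mle_cong) auto
    moreover have "tm_le (tm_le r) s u \<longleftrightarrow> tm_le r (pi s) (pi u)" if "u \<in># M" for u
      using IH Nd.prems(1) that by blast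
    ultimately show ?thesis
      using Nd by auto
  qed
qed

lemma pi_map_tm: "pi (map_tm id (map_tm id f) t) = map_tm id f (pi t)"
  by (induction t) (auto simp: tm.map multiset.map_comp intro!: image_mset_cong)

theorem proposition6p2:
  fixes n :: nat
  shows "(\<forall>(A :: 'a set) r. po A r \<longrightarrow>
            ord_iso (tms n (tmsm (Suc n) A)) (tm_le (tm_le r)) (tms (Suc n) A) (tm_le r) pi)
       \<and> (\<forall>(A :: 'a set) r (B :: 'b set) s f. po A r \<longrightarrow> po B s \<longrightarrow> qemb A r B s f \<longrightarrow>
            (\<forall>t \<in> tms n (tmsm (Suc n) A).
               pi (map_tm id (map_tm id f) t) = map_tm id f (pi t)))"
proof (intro conjI allI impI ballI)
  fix A :: "'a set" and r :: "'a \<Rightarrow> 'a \<Rightarrow> bool"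
  show "ord_iso (tms n (tmsm (Suc n) A)) (tm_le (tm_le r)) (tms (Suc n) A) (tm_le r) pi"
    unfolding ord_iso_def using bij_betw_pi tm_le_pi_iff zero_rooted_leaves_if_in_tms by blast
next
  fix f :: "'a \<Rightarrow> 'b" and t :: "(nat, (nat, 'a) tm) tm"
  show "pi (map_tm id (map_tm id f) t) = map_tm id f (pi t)"
    by (rule pi_map_tm)
qed

end
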